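(* Let $\lambda,\mu>0$ and let $(X_1,\dots,X_n)$, $n\ge2$, have joint survival function $$\Pr(X_1>x_1,\dots,X_n>x_n)=\exp\Big\{-\frac{\lambda}{\mu}\Big(\sqrt{1+\tfrac{2\mu^2}{\lambda}\textstyle\sum_{j=1}^n x_j}-1\Big)\Big\},\quad x_j\ge0.$$ Then for each pair $i\neq j$, Kendall's tau of $(X_i,X_j)$ is $$\tau(X_i,X_j)=1-\frac{a(2+a)-4e^{2/a}\Gamma(0,2/a)}{2a^2},\qquad a=\frac{\mu}{\lambda},$$ where $\Gamma(0,z)=\int_z^\infty t^{-1}e^{-t}\,dt$. *)

theory Defs
  imports "HOL-Probability.Probability"
begin

text \<open>Kendall's tau of a pair of real random variables (X, Y) on M:
  with (X',Y') an independent copy, it is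
  P((X - X')(Y - Y') > 0) - P((X - X')(Y - Y') < 0).
  Here P is the joint law of (X, Y) and the independent copy is realised
  via the product measure P x P.\<close>
definition kendall_tau :: "'a measure \<Rightarrow> ('a \<Rightarrow> real) \<Rightarrow> ('a \<Rightarrow> real) \<Rightarrow> real" where
  "kendall_tau M X Y =
    (let P = distr M (borel :: (real \<times> real) measure) (\<lambda>\<omega>. (X \<omega>, Y \<omega>)) in
       measure (P \<Otimes>\<^sub>M P) {(p, q). (fst p - fst q) * (snd p - snd q) > 0}
     - measure (P \<Otimes>\<^sub>M P) {(p, q). (fst p - fst q) * (snd p - snd q) < 0})"

definition upper_gamma0 :: "real \<Rightarrow> real" where
  "upper_gamma0 z = (LBINT t:{z<..}. exp (- t) / t)"

end

theory Submission
  imports Defs "HOL-Real_Asymp.Real_Asymp"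
begin

(*
  By hypothesis, P(X_i > a, X_j > b) = psi (a + b) for a, b >= 0, where
  psi t = exp (- (lam / mu) (sqrt (1 + kappa t) - 1)) and kappa = 2 mu^2 / lam. This determines the
  law of (X_i, X_j): it has density psi'' (x + y) on the open positive quadrant. Fixing the first
  copy p = (a, b), the sign of (a - X) (b - Y) has expectation 1 - 2 psi a - 2 psi b + 4 psi (a + b),
  hence tau = 1 - 2 E psi X - 2 E psi Y + 4 E psi (X + Y). The marginal terms are
  integral of psi (- psi') over (0, oo) = 1/2, and E psi (X + Y) is the integral of
  t psi t psi'' t over (0, oo); the substitution s = sqrt (1 + kappa t) reduces it to elementary
  integrals and the integral of exp (- w s) / s over (1, oo), which is Gamma (0, w) with w = 2 lam / mu.
*)

lemma nn_integral_greaterThan_eq_atLeast: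
  fixes u :: "real \<Rightarrow> ennreal"
  shows "(\<integral>\<^sup>+x. u x * indicator {a<..} x \<partial>lborel) = (\<integral>\<^sup>+x. u x * indicator {a..} x \<partial>lborel)"
  by (intro nn_integral_cong_AE, use AE_lborel_singleton[of a] in eventually_elim)
     (auto simp: indicator_def)

lemma nn_integral_atLeast_eq_SUP:
  fixes u :: "real \<Rightarrow> ennreal" and b :: "nat \<Rightarrow> real"
  assumes [measurable]: "u \<in> borel_measurable borel"
    and "incseq b" and "filterlim b at_top sequentially"
  shows "(\<integral>\<^sup>+x. u x * indicator {a..} x \<partial>lborel) = (SUP n. \<integral>\<^sup>+x. u x * indicator {a..b n} x \<partial>lborel)"
proof -
  have "indicator {a..} x = (SUP n. indicator {a..b n} x :: ennreal)" for x
  proof (cases "a \<le> x")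
    case True
    obtain N where "x \<le> b N"
      using \<open>filterlim b at_top sequentially\<close> by (auto simp: filterlim_at_top eventually_sequentially)
    then have "(SUP n. indicator {a..b n} x :: ennreal) = 1"
      using True by (intro antisym SUP_upper2[of N]) (auto intro!: SUP_least simp: indicator_def)
    then show ?thesis using True by simp
  qed (simp add: indicator_def)
  then have "(\<integral>\<^sup>+x. u x * indicator {a..} x \<partial>lborel) = (\<integral>\<^sup>+x. (SUP n. u x * indicator {a..b n} x) \<partial>lborel)"
    by (simp add: SUP_mult_left_ennreal)
  also have "\<dots> = (SUP n. \<integral>\<^sup>+x. u x * indicator {a..b n} x \<partial>lborel)"
    using \<open>incseq b\<close>
    by (intro nn_integral_monotone_convergence_SUP)
       (auto simp: incseq_def le_fun_def indicator_def intro: order_trans)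
  finally show ?thesis .
qed

lemma nn_integral_substitution_atLeast:
  fixes f g g' :: "real \<Rightarrow> real"
  assumes [measurable]: "f \<in> borel_measurable borel" "g \<in> borel_measurable borel" "g' \<in> borel_measurable borel"
    and deriv: "\<And>x. x \<ge> a \<Longrightarrow> (g has_real_derivative g' x) (at x)"
    and "continuous_on {a..} g'"
    and nonneg: "\<And>x. x \<ge> a \<Longrightarrow> g' x \<ge> 0"
    and "filterlim g at_top at_top"
  shows "(\<integral>\<^sup>+x. ennreal (f x) * indicator {g a..} x \<partial>lborel)
       = (\<integral>\<^sup>+x. ennreal (f (g x) * g' x) * indicator {a..} x \<partial>lborel)"
proof -
  define b where "b n = a + real n" for n
  have "incseq b" "filterlim b at_top sequentially"
    unfolding b_def incseq_def
    by (auto intro: filterlim_tendsto_add_at_top[OF tendsto_const filterlim_real_sequentially])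
  have "incseq (g \<circ> b)"
  proof -
    have "g x \<le> g y" if "a \<le> x" "x \<le> y" for x y
      using deriv nonneg that by (intro DERIV_nonneg_imp_nondecreasing[of x y g]) (auto intro: order_trans)
    then show ?thesis by (auto simp: incseq_def b_def)
  qed
  moreover have "filterlim (g \<circ> b) at_top sequentially"
    using \<open>filterlim g at_top at_top\<close> \<open>filterlim b at_top sequentially\<close>
    unfolding comp_def by (rule filterlim_compose)
  ultimately have "(\<integral>\<^sup>+x. ennreal (f x) * indicator {g a..} x \<partial>lborel)
      = (SUP n. \<integral>\<^sup>+x. ennreal (f x) * indicator {g a..g (b n)} x \<partial>lborel)"
    by (simp add: nn_integral_atLeast_eq_SUP[where b = "g \<circ> b"])
  also have "\<dots> = (SUP n. \<integral>\<^sup>+x. ennreal (f (g x) * g' x) * indicator {a..b n} x \<partial>lborel)"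
    using nn_integral_substitution[where f=f and g=g and a=a and g'=g'] deriv nonneg
      continuous_on_subset[OF \<open>continuous_on {a..} g'\<close>]
    by (auto simp: b_def ennreal_mult'' ennreal_indicator set_borel_measurable_def)
  also have "\<dots> = (\<integral>\<^sup>+x. ennreal (f (g x) * g' x) * indicator {a..} x \<partial>lborel)"
    using \<open>incseq b\<close> \<open>filterlim b at_top sequentially\<close>
    by (simp add: nn_integral_atLeast_eq_SUP[where b = b])
  finally show ?thesis .
qed

lemma nn_integral_exp_atLeast:
  fixes w :: real
  assumes "w > 0"
  shows "(\<integral>\<^sup>+s. ennreal (exp (- (w * s))) * indicator {a..} s \<partial>lborel) = ennreal (exp (- (w * a)) / w)"
proof -
  have "(\<integral>\<^sup>+s. ennreal (exp (- (w * s))) * indicator {a..} s \<partial>lborel) = 0 - (- exp (- (w * a)) / w)"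
    using assms
    by (intro nn_integral_FTC_atLeast[where F = "\<lambda>s. - exp (- (w * s)) / w"])
       (auto intro!: derivative_eq_intros, real_asymp)
  then show ?thesis by simp
qed

lemma nn_integral_atLeast_add:
  fixes f g :: "real \<Rightarrow> real"
  assumes [measurable]: "f \<in> borel_measurable borel" "g \<in> borel_measurable borel"
    and "\<And>x. x \<ge> a \<Longrightarrow> f x \<ge> 0" "\<And>x. x \<ge> a \<Longrightarrow> g x \<ge> 0"
  shows "(\<integral>\<^sup>+x. ennreal (f x + g x) * indicator {a..} x \<partial>lborel)
       = (\<integral>\<^sup>+x. ennreal (f x) * indicator {a..} x \<partial>lborel) + (\<integral>\<^sup>+x. ennreal (g x) * indicator {a..} x \<partial>lborel)"
  using assms(3,4)
  by (subst nn_integral_add[symmetric])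
     (auto intro!: nn_integral_cong simp: ennreal_plus split: split_indicator)

lemma nn_integral_atLeast_cmult:
  fixes f :: "real \<Rightarrow> real"
  assumes [measurable]: "f \<in> borel_measurable borel" and "c \<ge> 0"
  shows "(\<integral>\<^sup>+x. ennreal (c * f x) * indicator {a..} x \<partial>lborel)
       = ennreal c * (\<integral>\<^sup>+x. ennreal (f x) * indicator {a..} x \<partial>lborel)"
  using assms(2)
  by (subst nn_integral_cmult[symmetric]) (auto simp: ennreal_mult' mult.assoc)

lemma upper_gamma0_nonneg: "w > 0 \<Longrightarrow> upper_gamma0 w \<ge> 0"
  unfolding upper_gamma0_def set_lebesgue_integral_def
  by (intro integral_nonneg_AE AE_I2) (auto simp: indicator_def)

lemma upper_gamma0_eq_nn_integral:
  fixes w :: real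
  assumes "w > 0"
  shows "(\<integral>\<^sup>+s. ennreal (exp (- w * s) / s) * indicator {1..} s \<partial>lborel) = ennreal (upper_gamma0 w)"
proof -
  define E where "E = (\<integral>\<^sup>+u. ennreal (exp (- u) / u) * indicator {w..} u \<partial>lborel)"
  have "E = ennreal w * (\<integral>\<^sup>+s. ennreal (exp (- (w * s)) / (w * s)) * indicator {w..} (w * s) \<partial>lborel)"
    unfolding E_def using assms
    by (subst nn_integral_real_affine[where c = w and t = 0]) auto
  also have "\<dots> = (\<integral>\<^sup>+s. ennreal (exp (- w * s) / s) * indicator {1..} s \<partial>lborel)"
    using assms by (subst nn_integral_cmult[symmetric])
      (auto intro!: nn_integral_cong simp: indicator_def ennreal_mult[symmetric])
  finally have E_eq: "E = \<dots>" .
  have "E \<le> (\<integral>\<^sup>+u. ennreal (1 / w) * (ennreal (exp (- u)) * indicator {w..} u) \<partial>lborel)"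
    unfolding E_def using assms
    by (intro nn_integral_mono) (auto simp: indicator_def frac_le ennreal_mult[symmetric] intro!: ennreal_leI)
  also have "\<dots> = ennreal (1 / w) * ennreal (exp (- w))"
    using nn_integral_exp_atLeast[of 1 w] by (subst nn_integral_cmult) auto
  finally have "E < \<infinity>"
    by (rule le_less_trans) (simp add: ennreal_mult_less_top)
  have "upper_gamma0 w = enn2real (\<integral>\<^sup>+u. ennreal (indicator {w<..} u *\<^sub>R (exp (- u) / u)) \<partial>lborel)"
    unfolding upper_gamma0_def set_lebesgue_integral_def using assms
    by (intro integral_eq_nn_integral AE_I2) (auto simp: indicator_def)
  also have "\<dots> = enn2real E"
    unfolding E_def
    by (subst nn_integral_greaterThan_eq_atLeast[symmetric])
       (auto intro!: arg_cong[where f = enn2real] nn_integral_cong simp: indicator_def)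
  finally show ?thesis
    using E_eq \<open>E < \<infinity>\<close> by (simp add: less_top)
qed

lemma measure_eqI_upper_quadrants:
  fixes M N :: "(real \<times> real) measure"
  assumes "sets M = sets borel" "sets N = sets borel"
    and fin: "\<And>a b. emeasure M ({a<..} \<times> {b<..}) < \<infinity>"
    and eq: "\<And>a b. emeasure M ({a<..} \<times> {b<..}) = emeasure N ({a<..} \<times> {b<..})"
  shows "M = N"
proof (rule measure_eqI_generator_eq_countable)
  let ?E = "{A \<times> B | A B. A \<in> range (greaterThan :: real \<Rightarrow> real set) \<and> B \<in> range (greaterThan :: real \<Rightarrow> real set)}"
  have cover: "\<Union> (range (\<lambda>n::nat. {- real n<..})) = UNIV"
    by (auto simp: minus_less_iff reals_Archimedean2)
  have "sets (borel :: (real \<times> real) measure) = sigma_sets UNIV ?E"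
    unfolding borel_prod[symmetric] borel_Ioi
    by (subst sigma_prod) (use cover in \<open>auto intro!: exI[of _ "range (\<lambda>n::nat. {- real n<..})"]\<close>)
  then show "sets M = sigma_sets UNIV ?E" "sets N = sigma_sets UNIV ?E"
    using assms(1,2) by simp_all
  show "Int_stable ?E"
  proof (rule Int_stableI)
    fix X Y assume "X \<in> ?E" "Y \<in> ?E"
    then obtain a b c d where "X = {a<..} \<times> {b<..}" "Y = {c<..} \<times> {d<..}" by auto
    moreover have "{a<..} \<times> {b<..} \<inter> {c<..} \<times> {d<..} = {max a c<..} \<times> {max b d<..}" by auto
    ultimately show "X \<inter> Y \<in> ?E" by blast
  qed
  let ?A = "range (\<lambda>n::nat. {- real n<..} \<times> {- real n<..})"
  show "?A \<subseteq> ?E" "countable ?A" "\<Union> ?A = UNIV"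
    using cover by (auto simp: set_eq_iff) (meson reals_Archimedean2 max_less_iff_conj minus_less_iff)
qed (use fin eq in \<open>auto simp: less_top\<close>)

lemma AE_density_lborel_pair_coordinates_neq:
  fixes f :: "real \<times> real \<Rightarrow> ennreal"
  assumes "f \<in> borel_measurable (lborel \<Otimes>\<^sub>M lborel)"
  shows "AE q in density (lborel \<Otimes>\<^sub>M lborel) f. fst q \<noteq> c"
    and "AE q in density (lborel \<Otimes>\<^sub>M lborel) f. snd q \<noteq> c"
proof -
  have "{c} \<times> UNIV \<in> null_sets (lborel \<Otimes>\<^sub>M lborel)"
    by (intro lborel.times_in_null_sets1) (auto simp: null_sets_def)
  moreover have "UNIV \<times> {c} \<in> null_sets (lborel \<Otimes>\<^sub>M lborel)"
    by (intro lborel.times_in_null_sets2) (auto simp: null_sets_def)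
  ultimately have "AE q in lborel \<Otimes>\<^sub>M lborel. fst q \<noteq> c" "AE q in lborel \<Otimes>\<^sub>M lborel. snd q \<noteq> c"
    by (auto intro: AE_I' simp: mem_Times_iff)
  then show "AE q in density (lborel \<Otimes>\<^sub>M lborel) f. fst q \<noteq> c"
      "AE q in density (lborel \<Otimes>\<^sub>M lborel) f. snd q \<noteq> c"
    by (auto simp: AE_density[OF assms] elim: AE_mp)
qed

lemma concordance_difference_eq_integral:
  fixes P :: "(real \<times> real) measure"
  assumes "prob_space P" and sets_P: "sets P = sets borel"
    and no_ties: "\<And>c. AE q in P. fst q \<noteq> c" "\<And>c. AE q in P. snd q \<noteq> c"
  shows "measure (P \<Otimes>\<^sub>M P) {(p, q). (fst p - fst q) * (snd p - snd q) > 0}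
       - measure (P \<Otimes>\<^sub>M P) {(p, q). (fst p - fst q) * (snd p - snd q) < 0}
     = (\<integral>p. 1 - 2 * measure P ({fst p<..} \<times> UNIV) - 2 * measure P (UNIV \<times> {snd p<..})
            + 4 * measure P ({fst p<..} \<times> {snd p<..}) \<partial>P)"
proof -
  interpret P: prob_space P by fact
  interpret PP: pair_prob_space P P ..
  have [measurable_cong]: "sets P = sets (borel \<Otimes>\<^sub>M borel)"
    unfolding borel_prod by (rule sets_P)
  have space_P [simp]: "space P = UNIV"
    using sets_eq_imp_space_eq[OF sets_P] by simp
  have [simp]: "measure P UNIV = 1"
    using P.prob_space by simp
  define C where "C = {(p, q). (fst p - fst q) * (snd p - snd q) > (0::real)}"
  define D where "D = {(p, q). (fst p - fst q) * (snd p - snd q) < (0::real)}"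
  have C_eq: "C = {x \<in> space (P \<Otimes>\<^sub>M P). 0 < (fst (fst x) - fst (snd x)) * (snd (fst x) - snd (snd x))}"
    and D_eq: "D = {x \<in> space (P \<Otimes>\<^sub>M P). (fst (fst x) - fst (snd x)) * (snd (fst x) - snd (snd x)) < 0}"
    by (auto simp: C_def D_def space_pair_measure space_P)
  have [measurable]: "C \<in> sets (P \<Otimes>\<^sub>M P)" "D \<in> sets (P \<Otimes>\<^sub>M P)"
    unfolding C_eq D_eq by measurable
  have "measure (P \<Otimes>\<^sub>M P) C - measure (P \<Otimes>\<^sub>M P) D = (\<integral>x. indicator C x - indicator D x \<partial>(P \<Otimes>\<^sub>M P))"
    by (simp add: Bochner_Integration.integral_diff integrable_real_indicator less_top[symmetric]
        Int_absorb2 sets.sets_into_space)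
  also have "\<dots> = (\<integral>p. (\<integral>q. indicator C (p, q) - indicator D (p, q) \<partial>P) \<partial>P)"
    by (rule PP.integral_fst'[symmetric])
       (auto intro!: Bochner_Integration.integrable_diff integrable_real_indicator simp: less_top[symmetric])
  also have "\<dots> = (\<integral>p. 1 - 2 * measure P ({fst p<..} \<times> UNIV) - 2 * measure P (UNIV \<times> {snd p<..})
            + 4 * measure P ({fst p<..} \<times> {snd p<..}) \<partial>P)"
  proof (rule Bochner_Integration.integral_cong[OF refl])
    fix p :: "real \<times> real"
    let ?A1 = "{fst p<..} \<times> (UNIV :: real set)" and ?A2 = "(UNIV :: real set) \<times> {snd p<..}"
    have [measurable]: "?A1 \<in> sets P" "?A2 \<in> sets P" "?A1 \<inter> ?A2 \<in> sets P"
      by (auto simp: sets_P intro!: borel_open open_Times)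
    \<comment> \<open>Off the two lines through p the sign of the product is (1 - 2 [q \<in> A1]) (1 - 2 [q \<in> A2]).\<close>
    have "AE q in P. indicator C (p, q) - indicator D (p, q)
        = (1 - 2 * indicator ?A1 q - 2 * indicator ?A2 q + 4 * indicator (?A1 \<inter> ?A2) q :: real)"
      using no_ties(1)[of "fst p"] no_ties(2)[of "snd p"]
    proof eventually_elim
      case (elim q)
      then show ?case
        by (cases "fst q < fst p"; cases "snd q < snd p")
           (auto simp: C_def D_def indicator_def zero_less_mult_iff mult_less_0_iff mem_Times_iff)
    qed
    then have "(\<integral>q. indicator C (p, q) - indicator D (p, q) \<partial>P)
        = (\<integral>q. (1 - 2 * indicator ?A1 q - 2 * indicator ?A2 q + 4 * indicator (?A1 \<inter> ?A2) q :: real) \<partial>P)"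
      by (intro integral_cong_AE) measurable
    also have "\<dots> = 1 - 2 * measure P ?A1 - 2 * measure P ?A2 + 4 * measure P (?A1 \<inter> ?A2)"
      by (simp add: Bochner_Integration.integral_add Bochner_Integration.integral_diff
          integrable_real_indicator less_top[symmetric])
    finally show "(\<integral>q. indicator C (p, q) - indicator D (p, q) \<partial>P)
        = 1 - 2 * measure P ({fst p<..} \<times> UNIV) - 2 * measure P (UNIV \<times> {snd p<..})
            + 4 * measure P ({fst p<..} \<times> {snd p<..})"
      by (simp add: Times_Int_Times)
  qed
  finally show ?thesis by (simp add: C_def D_def)
qed

lemma measure_distr_pair_upper_quadrant:
  fixes X :: "nat \<Rightarrow> 'a \<Rightarrow> real" and S :: "real \<Rightarrow> real"
  assumes "prob_space M" and X: "\<And>k. k < n \<Longrightarrow> X k \<in> borel_measurable M"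
    and surv: "\<And>x. (\<forall>k<n. x k \<ge> 0) \<Longrightarrow> measure M {\<omega> \<in> space M. \<forall>k<n. X k \<omega> > x k} = S (\<Sum>k<n. x k)"
    and "S 0 = 1" and ij: "i < n" "j < n" "i \<noteq> j"
  shows "measure (distr M borel (\<lambda>\<omega>. (X i \<omega>, X j \<omega>))) ({a<..} \<times> {b<..}) = S (max a 0 + max b 0)"
proof -
  interpret M: prob_space M by fact
  have [measurable]: "X i \<in> borel_measurable M" "X j \<in> borel_measurable M"
    using X ij by auto
  have "measure M {\<omega> \<in> space M. \<forall>k<n. X k \<omega> > 0} = 1"
    using surv[of "\<lambda>_. 0"] \<open>S 0 = 1\<close> by simp
  then have pos: "AE \<omega> in M. \<forall>k<n. X k \<omega> > 0"
    by (auto dest: M.AE_prob_1)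
  define x where "x k = (if k = i then max a 0 else 0) + (if k = j then max b 0 else 0)" for k
  have "(\<Sum>k<n. x k) = max a 0 + max b 0"
    unfolding x_def sum.distrib using ij by simp
  have "measure (distr M borel (\<lambda>\<omega>. (X i \<omega>, X j \<omega>))) ({a<..} \<times> {b<..})
      = measure M {\<omega> \<in> space M. X i \<omega> > a \<and> X j \<omega> > b}"
    by (subst measure_distr) (auto simp: borel_prod[symmetric] intro!: arg_cong[where f = "measure M"])
  also have "\<dots> = measure M {\<omega> \<in> space M. \<forall>k<n. X k \<omega> > x k}"
  proof (rule measure_eq_AE)
    show "AE \<omega> in M. (\<omega> \<in> {\<omega> \<in> space M. X i \<omega> > a \<and> X j \<omega> > b})
        = (\<omega> \<in> {\<omega> \<in> space M. \<forall>k<n. X k \<omega> > x k})"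
      using pos
    proof eventually_elim
      case (elim \<omega>)
      then show ?case using ij unfolding x_def by (auto simp: max_def)
    qed
  next
    have "{\<omega> \<in> space M. \<forall>k<n. X k \<omega> > x k} = (\<Inter>k<n. {\<omega> \<in> space M. X k \<omega> > x k})"
      using ij by auto
    moreover have "{\<omega> \<in> space M. X k \<omega> > x k} \<in> sets M" if "k < n" for k
      using X[OF that] by measurable
    ultimately show "{\<omega> \<in> space M. \<forall>k<n. X k \<omega> > x k} \<in> sets M"
      using ij by (auto intro!: sets.finite_INT)
  qed measurable
  also have "\<dots> = S (max a 0 + max b 0)"
    using surv[of x] \<open>(\<Sum>k<n. x k) = max a 0 + max b 0\<close> by (simp add: x_def)
  finally show ?thesis .
qed

locale inverse_gaussian_frailty =
  fixes lam mu :: real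
  assumes lam_pos: "lam > 0" and mu_pos: "mu > 0"
begin

(* psi (x_1 + ... + x_n) is the joint survival function of the hypothesis; psi' and psi'' are its
   first two derivatives. *)
definition "kappa = 2 * mu\<^sup>2 / lam"
definition "rad t = sqrt (1 + kappa * t)"
definition "psi t = exp (- (lam / mu) * (rad t - 1))"
definition "psi' t = - mu * psi t / rad t"
definition "psi'' t = mu\<^sup>2 * psi t / (rad t)\<^sup>2 + mu * kappa * psi t / (2 * (rad t) ^ 3)"

lemma kappa_pos: "kappa > 0"
  using lam_pos mu_pos by (simp add: kappa_def)

lemma rad_ge_1: "t \<ge> 0 \<Longrightarrow> rad t \<ge> 1"
  using kappa_pos by (simp add: rad_def)

lemma psi_pos: "psi t > 0"
  by (simp add: psi_def)

lemma psi_0 [simp]: "psi 0 = 1"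
  by (simp add: psi_def rad_def)

lemma psi_le_1: "t \<ge> 0 \<Longrightarrow> psi t \<le> 1"
  using rad_ge_1[of t] lam_pos mu_pos by (simp add: psi_def)

lemma psi'_nonpos: "t \<ge> 0 \<Longrightarrow> psi' t \<le> 0"
  using rad_ge_1[of t] mu_pos psi_pos[of t] by (simp add: psi'_def)

lemma psi''_nonneg: "t \<ge> 0 \<Longrightarrow> psi'' t \<ge> 0"
  using rad_ge_1[of t] mu_pos psi_pos[of t] kappa_pos by (simp add: psi''_def)

lemma borel_measurable_rad [measurable]: "rad \<in> borel_measurable borel"
  unfolding rad_def[abs_def] by measurable

lemma borel_measurable_psi [measurable]: "psi \<in> borel_measurable borel"
  unfolding psi_def[abs_def] by measurable

lemma borel_measurable_psi' [measurable]: "psi' \<in> borel_measurable borel"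
  unfolding psi'_def[abs_def] by measurable

lemma borel_measurable_psi'' [measurable]: "psi'' \<in> borel_measurable borel"
  unfolding psi''_def[abs_def] by measurable

lemma has_real_derivative_rad:
  assumes "t \<ge> 0" shows "(rad has_real_derivative kappa / (2 * rad t)) (at t)"
proof -
  have "1 + kappa * t > 0" using kappa_pos assms by (simp add: add_pos_nonneg)
  then show ?thesis unfolding rad_def
    by (auto intro!: derivative_eq_intros simp: field_simps)
qed

lemma has_real_derivative_psi:
  assumes "t \<ge> 0" shows "(psi has_real_derivative psi' t) (at t)"
proof -
  have "(psi has_real_derivative psi t * (- (lam / mu) * (kappa / (2 * rad t)))) (at t)"
    unfolding psi_def[abs_def] using mu_pos
    by (auto intro!: derivative_eq_intros has_real_derivative_rad[OF assms] simp: field_simps)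
  moreover have "psi t * (- (lam / mu) * (kappa / (2 * rad t))) = psi' t"
    using lam_pos mu_pos rad_ge_1[OF assms] by (simp add: psi'_def kappa_def field_simps power2_eq_square)
  ultimately show ?thesis by simp
qed

lemma has_real_derivative_psi':
  assumes "t \<ge> 0" shows "(psi' has_real_derivative psi'' t) (at t)"
proof -
  have "(psi' has_real_derivative ((- mu * psi' t) * rad t - (- mu * psi t) * (kappa / (2 * rad t))) / (rad t * rad t)) (at t)"
    unfolding psi'_def[abs_def] using rad_ge_1[OF assms]
    by (auto intro!: derivative_eq_intros has_real_derivative_rad[OF assms]
        has_real_derivative_psi[OF assms, unfolded psi'_def] simp: psi'_def field_simps)
  moreover have "((- mu * psi' t) * rad t - (- mu * psi t) * (kappa / (2 * rad t))) / (rad t * rad t) = psi'' t"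
    using rad_ge_1[OF assms] by (simp add: psi'_def psi''_def field_simps power2_eq_square power3_eq_cube)
  ultimately show ?thesis by simp
qed

lemma tendsto_psi_at_top: "((\<lambda>y. psi (x + y)) \<longlongrightarrow> 0) at_top"
  using lam_pos mu_pos kappa_pos unfolding psi_def rad_def by real_asymp

lemma tendsto_psi'_at_top: "((\<lambda>y. psi' (x + y)) \<longlongrightarrow> 0) at_top"
  using lam_pos mu_pos kappa_pos unfolding psi'_def psi_def rad_def by real_asymp

lemma nn_integral_psi''_atLeast:
  assumes "x \<ge> 0" "b \<ge> 0"
  shows "(\<integral>\<^sup>+y. ennreal (psi'' (x + y)) * indicator {b..} y \<partial>lborel) = ennreal (- psi' (x + b))"
proof -
  have "(\<integral>\<^sup>+y. ennreal (psi'' (x + y)) * indicator {b..} y \<partial>lborel) = 0 - psi' (x + b)"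
  proof (rule nn_integral_FTC_atLeast)
    fix y assume "b \<le> y"
    then have "x + y \<ge> 0" using assms by simp
    show "((\<lambda>y. psi' (x + y)) has_real_derivative psi'' (x + y)) (at y)"
      using has_real_derivative_psi'[OF \<open>x + y \<ge> 0\<close>] DERIV_shift[of psi' _ y x]
      by (simp add: add.commute)
    show "0 \<le> psi'' (x + y)" using \<open>x + y \<ge> 0\<close> by (rule psi''_nonneg)
  qed (auto intro: tendsto_psi'_at_top)
  then show ?thesis by simp
qed

lemma nn_integral_neg_psi'_atLeast:
  assumes "a \<ge> 0" "b \<ge> 0"
  shows "(\<integral>\<^sup>+x. ennreal (- psi' (x + b)) * indicator {a..} x \<partial>lborel) = ennreal (psi (a + b))"
proof -
  have "(\<integral>\<^sup>+x. ennreal (- psi' (x + b)) * indicator {a..} x \<partial>lborel) = 0 - (- psi (a + b))"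
  proof (rule nn_integral_FTC_atLeast)
    fix x assume "a \<le> x"
    then have "x + b \<ge> 0" using assms by simp
    show "((\<lambda>x. - psi (x + b)) has_real_derivative - psi' (x + b)) (at x)"
      using has_real_derivative_psi[OF \<open>x + b \<ge> 0\<close>] DERIV_shift[of psi _ x b]
      by (auto intro: DERIV_minus)
    show "0 \<le> - psi' (x + b)" using psi'_nonpos[OF \<open>x + b \<ge> 0\<close>] by simp
  next
    show "((\<lambda>x. - psi (x + b)) \<longlongrightarrow> 0) at_top"
      using tendsto_minus[OF tendsto_psi_at_top[of b]] by (simp add: add.commute)
  qed measurable
  then show ?thesis by simp
qed

lemma nn_integral_psi_neg_psi':
  "(\<integral>\<^sup>+x. ennreal (psi x * - psi' x) * indicator {0..} x \<partial>lborel) = ennreal (1 / 2)"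
proof -
  have "(\<integral>\<^sup>+x. ennreal (psi x * - psi' x) * indicator {0..} x \<partial>lborel) = 0 - (- psi 0 * psi 0 / 2)"
  proof (rule nn_integral_FTC_atLeast)
    fix x :: real assume "0 \<le> x"
    then show "((\<lambda>x. - psi x * psi x / 2) has_real_derivative psi x * - psi' x) (at x)"
      by (auto intro!: derivative_eq_intros has_real_derivative_psi)
    show "0 \<le> psi x * - psi' x"
      using psi'_nonpos[OF \<open>0 \<le> x\<close>] psi_pos[of x] by (simp add: mult_nonneg_nonpos)
  next
    show "((\<lambda>x. - psi x * psi x / 2) \<longlongrightarrow> 0) at_top"
      using tendsto_psi_at_top[of 0] by (auto intro!: tendsto_eq_intros)
  qed measurable
  then show ?thesis by simp
qed

definition quadrant_density :: "real \<times> real \<Rightarrow> ennreal" where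
  "quadrant_density p = ennreal (psi'' (fst p + snd p)) * indicator ({0<..} \<times> {0<..}) p"

lemma borel_measurable_quadrant_density [measurable]:
  "quadrant_density \<in> borel_measurable (lborel \<Otimes>\<^sub>M lborel)"
  unfolding quadrant_density_def[abs_def] by measurable

lemma quadrant_density_swap: "quadrant_density (y, x) = quadrant_density (x, y)"
  by (simp add: quadrant_density_def indicator_def add.commute conj_commute)

lemma nn_integral_quadrant_density_fst:
  fixes g :: "real \<Rightarrow> ennreal"
  assumes [measurable]: "g \<in> borel_measurable borel"
  shows "(\<integral>\<^sup>+p. quadrant_density p * g (fst p) \<partial>(lborel \<Otimes>\<^sub>M lborel))
       = (\<integral>\<^sup>+x. g x * ennreal (- psi' x) * indicator {0<..} x \<partial>lborel)"
proof -
  have "(\<integral>\<^sup>+p. quadrant_density p * g (fst p) \<partial>(lborel \<Otimes>\<^sub>M lborel))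
      = (\<integral>\<^sup>+x. \<integral>\<^sup>+y. (g x * indicator {0<..} x) * (ennreal (psi'' (x + y)) * indicator {0<..} y) \<partial>lborel \<partial>lborel)"
    by (subst lborel.nn_integral_fst[symmetric])
       (auto intro!: nn_integral_cong simp: quadrant_density_def indicator_def mult_ac)
  also have "\<dots> = (\<integral>\<^sup>+x. g x * indicator {0<..} x * (\<integral>\<^sup>+y. ennreal (psi'' (x + y)) * indicator {0<..} y \<partial>lborel) \<partial>lborel)"
    by (subst nn_integral_cmult) auto
  also have "\<dots> = (\<integral>\<^sup>+x. g x * ennreal (- psi' x) * indicator {0<..} x \<partial>lborel)"
    by (intro nn_integral_cong)
       (auto simp: nn_integral_greaterThan_eq_atLeast nn_integral_psi''_atLeast split: split_indicator)
  finally show ?thesis .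
qed

lemma nn_integral_quadrant_density_snd:
  fixes g :: "real \<Rightarrow> ennreal"
  assumes [measurable]: "g \<in> borel_measurable borel"
  shows "(\<integral>\<^sup>+p. quadrant_density p * g (snd p) \<partial>(lborel \<Otimes>\<^sub>M lborel))
       = (\<integral>\<^sup>+x. g x * ennreal (- psi' x) * indicator {0<..} x \<partial>lborel)"
proof -
  have "(\<integral>\<^sup>+p. quadrant_density p * g (snd p) \<partial>(lborel \<Otimes>\<^sub>M lborel))
      = (\<integral>\<^sup>+y. \<integral>\<^sup>+x. quadrant_density (y, x) * g y \<partial>lborel \<partial>lborel)"
    by (subst lborel_pair.nn_integral_snd[symmetric]) (auto simp: quadrant_density_swap)
  also have "\<dots> = (\<integral>\<^sup>+p. quadrant_density p * g (fst p) \<partial>(lborel \<Otimes>\<^sub>M lborel))"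
    by (subst lborel.nn_integral_fst[symmetric]) auto
  finally show ?thesis
    by (simp add: nn_integral_quadrant_density_fst)
qed

lemma nn_integral_quadrant_density_upper_quadrant:
  assumes "a \<ge> 0" "b \<ge> 0"
  shows "(\<integral>\<^sup>+p. quadrant_density p * indicator ({a<..} \<times> {b<..}) p \<partial>(lborel \<Otimes>\<^sub>M lborel))
       = ennreal (psi (a + b))"
proof -
  have "(\<integral>\<^sup>+p. quadrant_density p * indicator ({a<..} \<times> {b<..}) p \<partial>(lborel \<Otimes>\<^sub>M lborel))
      = (\<integral>\<^sup>+x. \<integral>\<^sup>+y. indicator {a<..} x * (ennreal (psi'' (x + y)) * indicator {b<..} y) \<partial>lborel \<partial>lborel)"
    using assms
    by (subst lborel.nn_integral_fst[symmetric])
       (auto intro!: nn_integral_cong simp: quadrant_density_def indicator_def)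
  also have "\<dots> = (\<integral>\<^sup>+x. ennreal (- psi' (x + b)) * indicator {a<..} x \<partial>lborel)"
    using assms
    by (intro nn_integral_cong)
       (auto simp: nn_integral_cmult nn_integral_greaterThan_eq_atLeast nn_integral_psi''_atLeast
          split: split_indicator)
  also have "\<dots> = ennreal (psi (a + b))"
    using assms by (simp add: nn_integral_greaterThan_eq_atLeast nn_integral_neg_psi'_atLeast)
  finally show ?thesis .
qed

lemma nn_integral_quadrant_density_sum:
  "(\<integral>\<^sup>+p. quadrant_density p * ennreal (psi (fst p + snd p)) \<partial>(lborel \<Otimes>\<^sub>M lborel))
     = (\<integral>\<^sup>+t. ennreal (t * psi t * psi'' t) * indicator {0..} t \<partial>lborel)"
proof -
  define h where "h x t = indicator {0<..} x * of_bool (x < t) * ennreal (psi t * psi'' t)" for x t :: real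
  have [measurable]: "case_prod h \<in> borel_measurable (lborel \<Otimes>\<^sub>M lborel)"
    unfolding h_def by measurable
  have "(\<integral>\<^sup>+p. quadrant_density p * ennreal (psi (fst p + snd p)) \<partial>(lborel \<Otimes>\<^sub>M lborel))
      = (\<integral>\<^sup>+x. \<integral>\<^sup>+y. h x (x + y) \<partial>lborel \<partial>lborel)"
    by (subst lborel.nn_integral_fst[symmetric])
       (auto intro!: nn_integral_cong simp: quadrant_density_def h_def indicator_def
          ennreal_mult' less_imp_le[OF psi_pos] mult_ac)
  also have "\<dots> = (\<integral>\<^sup>+x. \<integral>\<^sup>+t. h x t \<partial>lborel \<partial>lborel)"
    using nn_integral_real_affine[where c = 1] by simp
  also have "\<dots> = (\<integral>\<^sup>+t. \<integral>\<^sup>+x. h x t \<partial>lborel \<partial>lborel)"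
    by (rule lborel_pair.Fubini'[symmetric]) measurable
  also have "\<dots> = (\<integral>\<^sup>+t. ennreal (t * psi t * psi'' t) * indicator {0..} t \<partial>lborel)"
  proof (rule nn_integral_cong)
    fix t :: real
    have "(\<integral>\<^sup>+x. h x t \<partial>lborel) = ennreal (psi t * psi'' t) * emeasure lborel {0<..<t}"
      by (subst nn_integral_cmult_indicator[symmetric]) (auto intro!: nn_integral_cong simp: h_def indicator_def)
    also have "\<dots> = ennreal (t * psi t * psi'' t) * indicator {0..} t"
      using psi_pos[of t] psi''_nonneg[of t]
      by (cases "t > 0") (auto simp: ennreal_mult'' mult_ac indicator_def)
    finally show "(\<integral>\<^sup>+x. h x t \<partial>lborel) = ennreal (t * psi t * psi'' t) * indicator {0..} t" .
  qed
  finally show ?thesis .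
qed

definition "w = 2 * lam / mu"

lemma w_pos: "w > 0"
  using lam_pos mu_pos by (simp add: w_def)

definition "moment_integrand s = (lam * s + mu - lam / s - mu / s\<^sup>2) * exp (- w * (s - 1)) / kappa"

lemma borel_measurable_moment_integrand [measurable]: "moment_integrand \<in> borel_measurable borel"
  unfolding moment_integrand_def[abs_def] by measurable

lemma moment_integrand_nonneg: "s \<ge> 1 \<Longrightarrow> moment_integrand s \<ge> 0"
proof -
  assume "s \<ge> 1"
  moreover have "s\<^sup>2 \<ge> 1" using \<open>s \<ge> 1\<close> by (simp add: one_le_power)
  ultimately have "lam / s \<le> lam * s" "mu / s\<^sup>2 \<le> mu"
    using lam_pos mu_pos by (auto simp: field_simps power2_eq_square)
  then show ?thesis
    using kappa_pos by (simp add: moment_integrand_def)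
qed

lemma nn_integral_moment_substitution:
  "(\<integral>\<^sup>+t. ennreal (t * psi t * psi'' t) * indicator {0..} t \<partial>lborel)
     = (\<integral>\<^sup>+s. ennreal (moment_integrand s) * indicator {1..} s \<partial>lborel)"
proof -
  define g where "g s = (s\<^sup>2 - 1) / kappa" for s :: real
  have "(\<integral>\<^sup>+t. ennreal (t * psi t * psi'' t) * indicator {g 1..} t \<partial>lborel)
     = (\<integral>\<^sup>+s. ennreal (g s * psi (g s) * psi'' (g s) * (2 * s / kappa)) * indicator {1..} s \<partial>lborel)"
    using kappa_pos unfolding g_def
    by (intro nn_integral_substitution_atLeast)
       (auto intro!: derivative_eq_intros continuous_intros, real_asymp)
  also have "\<dots> = (\<integral>\<^sup>+s. ennreal (moment_integrand s) * indicator {1..} s \<partial>lborel)"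
  proof (intro nn_integral_cong)
    fix s :: real
    have "g s * psi (g s) * psi'' (g s) * (2 * s / kappa) = moment_integrand s" if "s \<ge> 1"
    proof -
      define P where "P = psi (g s)"
      have rad: "rad (g s) = s" using kappa_pos that by (simp add: g_def rad_def)
      have sq: "P * P = exp (- w * (s - 1))"
        using mu_pos by (simp add: P_def psi_def rad w_def exp_add[symmetric] field_simps)
      have "2 * mu\<^sup>2 = lam * kappa" using lam_pos by (simp add: kappa_def)
      then show ?thesis
        using that kappa_pos unfolding psi''_def rad P_def[symmetric] moment_integrand_def sq[symmetric]
        unfolding g_def by (simp add: field_simps power2_eq_square power3_eq_cube)
    qed
    then show "ennreal (g s * psi (g s) * psi'' (g s) * (2 * s / kappa)) * indicator {1..} s
        = ennreal (moment_integrand s) * indicator {1..} s"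
      by (simp split: split_indicator)
  qed
  finally show ?thesis by (simp add: g_def)
qed

definition "moment_elementary s = exp (- w * s) * (lam * s + mu + lam - 2 * lam / s - mu / s\<^sup>2)"

lemma borel_measurable_moment_elementary [measurable]: "moment_elementary \<in> borel_measurable borel"
  unfolding moment_elementary_def[abs_def] by measurable

lemma moment_elementary_nonneg: "s \<ge> 1 \<Longrightarrow> moment_elementary s \<ge> 0"
proof -
  assume "s \<ge> 1"
  moreover have "s\<^sup>2 \<ge> 1" using \<open>s \<ge> 1\<close> by (simp add: one_le_power)
  ultimately have "lam / s \<le> lam" "lam / s \<le> lam * s" "mu / s\<^sup>2 \<le> mu"
    using lam_pos mu_pos by (auto simp: field_simps power2_eq_square)
  then show ?thesis by (simp add: moment_elementary_def)
qed

lemma nn_integral_moment_elementary: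
  "(\<integral>\<^sup>+s. ennreal (moment_elementary s) * indicator {1..} s \<partial>lborel) = ennreal (3 * mu\<^sup>2 / (4 * lam) * exp (- w))"
proof -
  define F where "F s = - exp (- w * s) * ((lam * s + mu) / w + lam / w\<^sup>2 + lam / w - mu / s)" for s
  have "(\<integral>\<^sup>+s. ennreal (moment_elementary s) * indicator {1..} s \<partial>lborel) = 0 - F 1"
  proof (rule nn_integral_FTC_atLeast)
    fix s :: real assume "1 \<le> s"
    have "(F has_real_derivative exp (- w * s) * (w * ((lam * s + mu) / w + lam / w\<^sup>2 + lam / w - mu / s)
        - (lam / w + mu / s\<^sup>2))) (at s)"
      unfolding F_def[abs_def] using \<open>1 \<le> s\<close> w_pos
      by (auto intro!: derivative_eq_intros simp: field_simps power2_eq_square)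
    moreover have "w * ((lam * s + mu) / w + lam / w\<^sup>2 + lam / w - mu / s) - (lam / w + mu / s\<^sup>2)
        = lam * s + mu + lam - mu * w / s - mu / s\<^sup>2"
      using w_pos \<open>1 \<le> s\<close> by (simp add: field_simps power2_eq_square)
    moreover have "mu * w = 2 * lam" using mu_pos by (simp add: w_def)
    ultimately show "(F has_real_derivative moment_elementary s) (at s)"
      by (simp add: moment_elementary_def)
    show "0 \<le> moment_elementary s" using \<open>1 \<le> s\<close> by (rule moment_elementary_nonneg)
  next
    show "(F \<longlongrightarrow> 0) at_top" unfolding F_def using w_pos by real_asymp
  qed measurable
  moreover have "- F 1 = 3 * mu\<^sup>2 / (4 * lam) * exp (- w)"
    using lam_pos mu_pos unfolding F_def w_def by (simp add: field_simps power2_eq_square)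
  ultimately show ?thesis by simp
qed

(* Adding lam exp (- w s) splits off the integrand of upper_gamma0 from a part with an elementary
   primitive while keeping every summand nonnegative. *)
lemma moment_integrand_split:
  assumes "s \<ge> 1"
  shows "kappa * exp (- w) * moment_integrand s + lam * exp (- w * s)
       = moment_elementary s + lam * (exp (- w * s) / s)"
proof -
  have "exp (- w * (s - 1)) * exp (- w) = exp (- w * s)"
    by (simp add: exp_add[symmetric] algebra_simps)
  then show ?thesis
    using assms kappa_pos by (simp add: moment_integrand_def moment_elementary_def field_simps)
qed

definition "psi_sum_mean = 3 / 8 - lam / (4 * mu) + (lam / mu)\<^sup>2 / 2 * exp w * upper_gamma0 w"

lemma nn_integral_moment_integrand:
  "(\<integral>\<^sup>+s. ennreal (moment_integrand s) * indicator {1..} s \<partial>lborel) = ennreal psi_sum_mean"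
  "psi_sum_mean \<ge> 0"
proof -
  define J where "J = (\<integral>\<^sup>+s. ennreal (moment_integrand s) * indicator {1..} s \<partial>lborel)"
  define c where "c = kappa * exp (- w)"
  define G where "G = upper_gamma0 w"
  have "c > 0" "G \<ge> 0"
    using kappa_pos upper_gamma0_nonneg[OF w_pos] by (simp_all add: c_def G_def)
  have "ennreal c * J + ennreal lam * ennreal (exp (- w * 1) / w)
      = (\<integral>\<^sup>+s. ennreal (c * moment_integrand s + lam * exp (- w * s)) * indicator {1..} s \<partial>lborel)"
    using \<open>c > 0\<close> lam_pos w_pos moment_integrand_nonneg
    by (simp add: J_def nn_integral_atLeast_add nn_integral_atLeast_cmult nn_integral_exp_atLeast)
  also have "\<dots> = (\<integral>\<^sup>+s. ennreal (moment_elementary s + lam * (exp (- w * s) / s)) * indicator {1..} s \<partial>lborel)"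
    using moment_integrand_split[folded c_def] by (intro nn_integral_cong) (auto split: split_indicator)
  also have "\<dots> = (\<integral>\<^sup>+s. ennreal (moment_elementary s) * indicator {1..} s \<partial>lborel)
      + (\<integral>\<^sup>+s. ennreal (lam * (exp (- w * s) / s)) * indicator {1..} s \<partial>lborel)"
    using moment_elementary_nonneg lam_pos by (intro nn_integral_atLeast_add) auto
  also have "\<dots> = ennreal (3 * mu\<^sup>2 / (4 * lam) * exp (- w)) + ennreal lam * ennreal G"
    using lam_pos
    by (subst nn_integral_atLeast_cmult)
       (simp_all only: nn_integral_moment_elementary upper_gamma0_eq_nn_integral[OF w_pos] G_def, auto)
  finally have eq: "ennreal c * J + ennreal lam * ennreal (exp (- w) / w)
      = ennreal (3 * mu\<^sup>2 / (4 * lam) * exp (- w)) + ennreal lam * ennreal G"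
    by simp
  then have "J \<noteq> \<infinity>"
    using \<open>c > 0\<close> lam_pos \<open>G \<ge> 0\<close>
    by (auto simp: ennreal_mult_eq_top_iff ennreal_mult[symmetric] ennreal_plus[symmetric] simp del: ennreal_plus)
  then obtain Jr where Jr: "J = ennreal Jr" "Jr \<ge> 0"
    by (cases J) auto
  have "c * Jr + lam * exp (- w) / w = 3 * mu\<^sup>2 / (4 * lam) * exp (- w) + lam * G"
    using eq Jr \<open>c > 0\<close> lam_pos w_pos \<open>G \<ge> 0\<close>
    by (simp add: ennreal_plus[symmetric] ennreal_mult[symmetric] ennreal_inj del: ennreal_plus)
  then have "Jr = (3 * mu\<^sup>2 / (4 * lam) + lam * G * exp w - lam / w) / kappa"
    using kappa_pos w_pos by (simp add: c_def exp_minus field_simps)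
  also have "\<dots> = psi_sum_mean"
    using lam_pos mu_pos unfolding psi_sum_mean_def w_def kappa_def G_def
    by (simp add: field_simps power2_eq_square)
  finally have "Jr = psi_sum_mean" .
  then show "J = ennreal psi_sum_mean" "psi_sum_mean \<ge> 0"
    using Jr by simp_all
qed

abbreviation "quadrant_law \<equiv> density (lborel \<Otimes>\<^sub>M lborel) quadrant_density"

lemma integral_quadrant_law_psi:
  "(\<integral>p. psi (fst p) \<partial>quadrant_law) = 1 / 2"
  "(\<integral>p. psi (snd p) \<partial>quadrant_law) = 1 / 2"
  "(\<integral>p. psi (fst p + snd p) \<partial>quadrant_law) = psi_sum_mean"
proof -
  have integral_eq: "(\<integral>p. g p \<partial>quadrant_law)
      = enn2real (\<integral>\<^sup>+p. quadrant_density p * ennreal (g p) \<partial>(lborel \<Otimes>\<^sub>M lborel))"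
    if [measurable]: "g \<in> borel_measurable (lborel \<Otimes>\<^sub>M lborel)" and "\<And>p. g p \<ge> 0" for g
    using that(2) by (subst integral_eq_nn_integral) (auto simp: nn_integral_density)
  have half: "(\<integral>\<^sup>+x. ennreal (psi x) * ennreal (- psi' x) * indicator {0<..} x \<partial>lborel) = ennreal (1 / 2)"
  proof -
    have "(\<integral>\<^sup>+x. ennreal (psi x) * ennreal (- psi' x) * indicator {0<..} x \<partial>lborel)
        = (\<integral>\<^sup>+x. ennreal (psi x * - psi' x) * indicator {0..} x \<partial>lborel)"
      using ennreal_mult'[OF less_imp_le[OF psi_pos], symmetric]
      by (subst nn_integral_greaterThan_eq_atLeast) (simp only:)
    then show ?thesis by (simp only: nn_integral_psi_neg_psi')
  qed
  show "(\<integral>p. psi (fst p) \<partial>quadrant_law) = 1 / 2" "(\<integral>p. psi (snd p) \<partial>quadrant_law) = 1 / 2"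
    using nn_integral_quadrant_density_fst[of "\<lambda>x. ennreal (psi x)"]
      nn_integral_quadrant_density_snd[of "\<lambda>x. ennreal (psi x)"]
    by (simp_all add: integral_eq half less_imp_le[OF psi_pos] del: ennreal_half)
  show "(\<integral>p. psi (fst p + snd p) \<partial>quadrant_law) = psi_sum_mean"
    by (simp add: integral_eq less_imp_le[OF psi_pos] nn_integral_quadrant_density_sum nn_integral_moment_substitution
        nn_integral_moment_integrand)
qed

lemma eq_quadrant_law:
  assumes "prob_space P" "sets P = sets borel"
    and surv: "\<And>a b. measure P ({a<..} \<times> {b<..}) = psi (max a 0 + max b 0)"
  shows "P = quadrant_law"
proof (rule measure_eqI_upper_quadrants)
  interpret P: prob_space P by fact
  show "sets P = sets borel" by fact
  show "sets quadrant_law = sets borel"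
    by (metis borel_prod sets_density sets_lborel sets_pair_measure_cong)
  fix a b :: real
  show "emeasure P ({a<..} \<times> {b<..}) < \<infinity>"
    by (simp add: less_top[symmetric])
  have "emeasure P ({a<..} \<times> {b<..}) = ennreal (psi (max a 0 + max b 0))"
    using surv by (simp add: P.emeasure_eq_measure)
  also have "\<dots> = (\<integral>\<^sup>+p. quadrant_density p * indicator ({max a 0<..} \<times> {max b 0<..}) p \<partial>(lborel \<Otimes>\<^sub>M lborel))"
    by (simp add: nn_integral_quadrant_density_upper_quadrant)
  also have "\<dots> = (\<integral>\<^sup>+p. quadrant_density p * indicator ({a<..} \<times> {b<..}) p \<partial>(lborel \<Otimes>\<^sub>M lborel))"
    by (intro nn_integral_cong) (auto simp: quadrant_density_def indicator_def)
  also have "\<dots> = emeasure quadrant_law ({a<..} \<times> {b<..})"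
    by (rule emeasure_density[symmetric]) (auto intro: borel_open open_Times simp: borel_prod[symmetric])
  finally show "emeasure P ({a<..} \<times> {b<..}) = emeasure quadrant_law ({a<..} \<times> {b<..})" .
qed

lemma concordance_difference:
  assumes "prob_space P" and sets_P: "sets P = sets borel"
    and surv: "\<And>a b. measure P ({a<..} \<times> {b<..}) = psi (max a 0 + max b 0)"
  shows "measure (P \<Otimes>\<^sub>M P) {(p, q). (fst p - fst q) * (snd p - snd q) > 0}
       - measure (P \<Otimes>\<^sub>M P) {(p, q). (fst p - fst q) * (snd p - snd q) < 0}
     = 4 * psi_sum_mean - 1"
proof -
  interpret P: prob_space P by fact
  have P_eq: "P = quadrant_law"
    using assms by (rule eq_quadrant_law)
  have [measurable_cong]: "sets P = sets (borel \<Otimes>\<^sub>M borel)"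
    unfolding borel_prod by (rule sets_P)
  have open_sets: "A \<in> sets P" if "open A" for A
    using that by (simp add: sets_P)
  have "P.prob ({0<..} \<times> {0<..}) = 1"
    using surv[of 0 0] by simp
  then have "AE p in P. p \<in> {0<..} \<times> {0<..}"
    by (rule P.AE_prob_1)
  then have pos: "AE p in P. fst p > 0 \<and> snd p > 0"
    by (auto elim: AE_mp)
  have margins: "measure P ({a<..} \<times> UNIV) = psi (max a 0)" "measure P (UNIV \<times> {a<..}) = psi (max a 0)" for a
  proof -
    have "measure P ({a<..} \<times> UNIV) = measure P ({a<..} \<times> {0<..})"
      "measure P (UNIV \<times> {a<..}) = measure P ({0<..} \<times> {a<..})"
      using pos by (auto intro!: measure_eq_AE open_sets open_Times elim!: AE_mp)
    then show "measure P ({a<..} \<times> UNIV) = psi (max a 0)" "measure P (UNIV \<times> {a<..}) = psi (max a 0)"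
      by (simp_all add: surv)
  qed
  have no_ties: "AE q in P. fst q \<noteq> c" "AE q in P. snd q \<noteq> c" for c
    unfolding P_eq by (rule AE_density_lborel_pair_coordinates_neq, measurable)+
  have bounded: "AE p in P. \<bar>psi (fst p)\<bar> \<le> 1 \<and> \<bar>psi (snd p)\<bar> \<le> 1 \<and> \<bar>psi (fst p + snd p)\<bar> \<le> 1"
    using pos by eventually_elim (auto simp: less_imp_le[OF psi_pos] intro!: psi_le_1)
  have integrable: "integrable P (\<lambda>p. psi (fst p))" "integrable P (\<lambda>p. psi (snd p))"
      "integrable P (\<lambda>p. psi (fst p + snd p))"
    by (rule P.integrable_const_bound[where B = 1], use bounded in \<open>auto elim: AE_mp\<close>)+
  have "measure (P \<Otimes>\<^sub>M P) {(p, q). (fst p - fst q) * (snd p - snd q) > 0}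
       - measure (P \<Otimes>\<^sub>M P) {(p, q). (fst p - fst q) * (snd p - snd q) < 0}
      = (\<integral>p. 1 - 2 * measure P ({fst p<..} \<times> UNIV) - 2 * measure P (UNIV \<times> {snd p<..})
            + 4 * measure P ({fst p<..} \<times> {snd p<..}) \<partial>P)"
    by (rule concordance_difference_eq_integral[OF assms(1) sets_P no_ties])
  also have "\<dots> = (\<integral>p. 1 - 2 * psi (fst p) - 2 * psi (snd p) + 4 * psi (fst p + snd p) \<partial>P)"
    using pos by (intro integral_cong_AE) (auto simp: margins surv elim!: AE_mp)
  also have "\<dots> = 1 - 2 * (1 / 2) - 2 * (1 / 2) + 4 * psi_sum_mean"
    by (simp add: Bochner_Integration.integral_add Bochner_Integration.integral_diff integrable
        integral_quadrant_law_psi[folded P_eq] P.prob_space[simplified])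
  finally show ?thesis by simp
qed

end

theorem lemma3:
  fixes M :: "'a measure" and X :: "nat \<Rightarrow> 'a \<Rightarrow> real"
    and n :: nat and lam mu :: real and i j :: nat
  assumes "prob_space M"
    and "n \<ge> 2" and "lam > 0" and "mu > 0"
    and "\<And>k. k < n \<Longrightarrow> X k \<in> borel_measurable M"
    and "\<And>x :: nat \<Rightarrow> real. (\<forall>k<n. x k \<ge> 0) \<Longrightarrow>
           measure M {\<omega> \<in> space M. \<forall>k<n. X k \<omega> > x k}
             = exp (- (lam / mu) * (sqrt (1 + (2 * mu\<^sup>2 / lam) * (\<Sum>k<n. x k)) - 1))"
    and "i < n" and "j < n" and "i \<noteq> j"
  shows "kendall_tau M (X i) (X j)
           = 1 - ((mu / lam) * (2 + mu / lam) - 4 * exp (2 / (mu / lam)) * upper_gamma0 (2 / (mu / lam)))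
                 / (2 * (mu / lam)\<^sup>2)"
proof -
  interpret inverse_gaussian_frailty lam mu
    using assms(3,4) by unfold_locales
  define P where "P = distr M borel (\<lambda>\<omega>. (X i \<omega>, X j \<omega>))"
  have "(\<lambda>\<omega>. (X i \<omega>, X j \<omega>)) \<in> M \<rightarrow>\<^sub>M borel"
    using assms(5,7,8) unfolding borel_prod[symmetric] by measurable
  then have "prob_space P"
    unfolding P_def by (rule prob_space.prob_space_distr[OF assms(1)])
  moreover have "sets P = sets borel"
    by (simp add: P_def)
  moreover have "measure P ({a<..} \<times> {b<..}) = psi (max a 0 + max b 0)" for a b
    unfolding P_def using assms
    by (intro measure_distr_pair_upper_quadrant) (simp_all add: psi_def rad_def kappa_def)
  ultimately have "kendall_tau M (X i) (X j) = 4 * psi_sum_mean - 1"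
    unfolding kendall_tau_def Let_def P_def[symmetric] by (rule concordance_difference)
  also have "\<dots> = 1 - ((mu / lam) * (2 + mu / lam) - 4 * exp (2 / (mu / lam)) * upper_gamma0 (2 / (mu / lam)))
                 / (2 * (mu / lam)\<^sup>2)"
    using assms(3,4) by (simp add: psi_sum_mean_def w_def field_simps power2_eq_square)
  finally show ?thesis .
qed

end
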